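(* Let $G$, $k\ge 3$, the choice strings, the template strings, $L$ and $d$ be as in the Consensus Patterns construction in the context, and let $s\in\{0,1\}^L$ together with a choice of one length-$L$ substring (match) in each choice string and each template string be a solution of the constructed instance (total Hamming distance at most $d$). Then $s$ and all its matches start with $\mathrm{front\_tag}$.
   Context: Let $G=(V,E)$ be an undirected simple graph with $V=\{v_1,\dots,v_n\}$ and edge set $E=\{e_1,\dots,e_m\}$, and let $k\ge 3$ be an integer. All strings are over $\{0,1\}$. For $1\le p\le n$ let $\mathrm{number}(p)=0^{p-1}10^{n-p}$. Let $\mathrm{front\_tag}=(1^{nk^3}0)^{nk^3}0^{nk^3}$ (length $n^2k^6+2nk^3$). For $1\le i<j\le k$ and an edge $e$ joining $v_r,v_s$ with $r<s$ let $\mathrm{encode}(i,j,e)=(0^n)^{i-1}\,\mathrm{number}(r)\,(0^n)^{j-i-1}\,\mathrm{number}(s)\,(0^n)^{k-j}$ and $\mathrm{block}(i,j,e)=\mathrm{front\_tag}\,\mathrm{encode}(i,j,e)$. The choice string is $c_{i,j}=\mathrm{block}(i,j,e_1)\cdots\mathrm{block}(i,j,e_m)$. There are $\binom{k}{2}-(k-1)$ template strings, each equal to $\mathrm{front\_tag}\,1^{nk}$. Set $L=n^2k^6+2nk^3+nk$ and $d=(\binom{k}{2}-(k-1))nk$. The instance consists of all choice strings and template strings; a solution is a string $s$ of length $L$ and a length-$L$ substring of each input string such that the sum of Hamming distances from $s$ to these substrings is at most $d$. *)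

theory Defs
  imports Main "HOL-Library.Sublist"
begin

(* Binary strings are lists of bool; True = 1, False = 0. *)

definition ones :: "nat \<Rightarrow> bool list" where "ones l = replicate l True"
definition zeros :: "nat \<Rightarrow> bool list" where "zeros l = replicate l False"

definition number :: "nat \<Rightarrow> nat \<Rightarrow> bool list" where
  "number n p = zeros (p - 1) @ [True] @ zeros (n - p)"

definition front_tag :: "nat \<Rightarrow> nat \<Rightarrow> bool list" where
  "front_tag n k = concat (replicate (n * k^3) (ones (n * k^3) @ [False])) @ zeros (n * k^3)"

(* an edge is a pair (r, s) of vertex indices with r < s *)
definition encode :: "nat \<Rightarrow> nat \<Rightarrow> nat \<Rightarrow> nat \<Rightarrow> nat \<times> nat \<Rightarrow> bool list" where
  "encode n k i j e = (case e of (r, s) \<Rightarrow>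
      concat (replicate (i - 1) (zeros n)) @ number n r @
      concat (replicate (j - i - 1) (zeros n)) @ number n s @
      concat (replicate (k - j) (zeros n)))"

definition block :: "nat \<Rightarrow> nat \<Rightarrow> nat \<Rightarrow> nat \<Rightarrow> nat \<times> nat \<Rightarrow> bool list" where
  "block n k i j e = front_tag n k @ encode n k i j e"

definition choice_string :: "nat \<Rightarrow> nat \<Rightarrow> (nat \<times> nat) list \<Rightarrow> nat \<Rightarrow> nat \<Rightarrow> bool list" where
  "choice_string n k es i j = concat (map (block n k i j) es)"

definition template_string :: "nat \<Rightarrow> nat \<Rightarrow> bool list" where
  "template_string n k = front_tag n k @ ones (n * k)"

definition num_templates :: "nat \<Rightarrow> nat" where
  "num_templates k = (k choose 2) - (k - 1)"

definition cp_len :: "nat \<Rightarrow> nat \<Rightarrow> nat" where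
  "cp_len n k = n^2 * k^6 + 2 * n * k^3 + n * k"

definition cp_dist :: "nat \<Rightarrow> nat \<Rightarrow> nat" where
  "cp_dist n k = num_templates k * n * k"

definition pairs :: "nat \<Rightarrow> (nat \<times> nat) set" where
  "pairs k = {(i, j). 1 \<le> i \<and> i < j \<and> j \<le> k}"

definition hamming :: "bool list \<Rightarrow> bool list \<Rightarrow> nat" where
  "hamming x y = length (filter id (map2 (\<noteq>) x y))"

definition substr :: "bool list \<Rightarrow> nat \<Rightarrow> nat \<Rightarrow> bool list" where
  "substr w p l = take l (drop p w)"

definition simple_graph_edges :: "nat \<Rightarrow> (nat \<times> nat) list \<Rightarrow> bool" where
  "simple_graph_edges n es \<longleftrightarrow> distinct es \<and> (\<forall>(r, s) \<in> set es. 1 \<le> r \<and> r < s \<and> s \<le> n)"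

definition is_solution :: "nat \<Rightarrow> nat \<Rightarrow> (nat \<times> nat) list \<Rightarrow> bool list \<Rightarrow>
    (nat \<Rightarrow> nat \<Rightarrow> nat) \<Rightarrow> (nat \<Rightarrow> nat) \<Rightarrow> bool" where
  "is_solution n k es s pc pt \<longleftrightarrow>
     length s = cp_len n k \<and>
     (\<forall>(i, j) \<in> pairs k. pc i j + cp_len n k \<le> length (choice_string n k es i j)) \<and>
     (\<forall>t < num_templates k. pt t + cp_len n k \<le> length (template_string n k)) \<and>
     (\<Sum>(i, j) \<in> pairs k. hamming s (substr (choice_string n k es i j) (pc i j) (cp_len n k)))
       + (\<Sum>t < num_templates k. hamming s (substr (template_string n k) (pt t) (cp_len n k)))
       \<le> cp_dist n k"

end

(*
  The front tag F = (1^N 0)^N 0^N, N = n k^3, has no good self-overlap: a window of length |F|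
  that starts at a nonzero offset inside a concatenation of blocks F @ (n k bits) disagrees with F
  in at least N - 1 places, because either the isolated zeros of F meet ones of a shifted copy,
  or the final zero run of one copy meets the almost all-ones periodic part of another. The budget
  d = T n k, T the number of templates, is below N - 1, so by the triangle inequality through s
  every choice match is a whole block F @ encode(i,j,e), and every template match is the template
  F @ 1^(nk) itself.

  Split s = s1 @ s2 with |s1| = |F|. Every column of s2 costs at least T over all matches: a 0
  disagrees with the T templates, and a 1 disagrees with all but at most k - 1 of the
  C(k,2) = T + k - 1 encodings, since encode(i,j,e) has ones only in the sections i and j.
  This alone exhausts the budget, so T d(s1, F) = 0.
*)

theory Submission
  imports Defs
begin

section \<open>Hamming distance\<close>

lemma hamming_Nil [simp]: "hamming [] y = 0" "hamming x [] = 0"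
  by (simp_all add: hamming_def)

lemma hamming_Cons [simp]: "hamming (a # x) (b # y) = of_bool (a \<noteq> b) + hamming x y"
  by (simp add: hamming_def)

lemma hamming_commute: "hamming x y = hamming y x"
  by (induction x y rule: list_induct2') auto

lemma hamming_append: "length a = length c \<Longrightarrow> hamming (a @ b) (c @ d) = hamming a c + hamming b d"
  by (induction a c rule: list_induct2) auto

lemma hamming_take_le: "hamming (take m x) (take m y) \<le> hamming x y"
  by (induction x y arbitrary: m rule: list_induct2') (auto simp: take_Cons')

lemma hamming_triangle:
  "length x = length y \<Longrightarrow> length y = length z \<Longrightarrow> hamming x z \<le> hamming x y + hamming y z"
  by (induction x y z rule: list_induct3) auto

lemma hamming_conv_sum:
  "length x = length y \<Longrightarrow> hamming x y = (\<Sum>q<length x. of_bool (x ! q \<noteq> y ! q))"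
  by (induction x y rule: list_induct2)
    (simp_all add: sum.lessThan_Suc_shift del: sum_of_bool_eq sum.lessThan_Suc)

lemma card_le_hamming:
  assumes "length x = length y" "\<forall>q\<in>A. q < length x \<and> x ! q \<noteq> y ! q"
  shows "card A \<le> hamming x y"
proof -
  have "card A = (\<Sum>q\<in>A. of_bool (x ! q \<noteq> y ! q))"
    using assms(2) by (simp del: sum_of_bool_eq)
  also have "\<dots> \<le> (\<Sum>q<length x. of_bool (x ! q \<noteq> y ! q))"
    by (rule sum_mono2) (use assms(2) in auto)
  finally show ?thesis using hamming_conv_sum[OF assms(1)] by simp
qed

lemma hamming_eq_0_iff: "length x = length y \<Longrightarrow> hamming x y = 0 \<longleftrightarrow> x = y"
  by (induction x y rule: list_induct2) auto

section \<open>Shifted copies of the front tag\<close>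

lemma length_concat_replicate [simp]: "length (concat (replicate m xs)) = m * length xs"
  by (simp add: length_concat sum_list_replicate)

lemma length_concat_equal_length:
  "\<forall>b\<in>set bs. length b = L \<Longrightarrow> length (concat bs) = length bs * L"
  by (simp add: length_concat sum_list_triv cong: map_cong)

lemma nth_concat_equal_length:
  assumes "\<forall>b\<in>set bs. length b = L" "q < length bs * L"
  shows "concat bs ! q = bs ! (q div L) ! (q mod L)"
  using assms
proof (induction bs arbitrary: q)
  case Nil
  then show ?case by simp
next
  case (Cons b bs)
  show ?case
  proof (cases "q < L")
    case True
    then show ?thesis using Cons.prems by (simp add: nth_append)
  next
    case False
    then have "concat bs ! (q - L) = bs ! ((q - L) div L) ! ((q - L) mod L)"
      using Cons by (intro Cons.IH) auto
    moreover have "0 < L" using Cons.prems(2) by (cases L) auto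
    ultimately show ?thesis
      using False Cons.prems(1) by (simp add: nth_append le_div_geq le_mod_geq)
  qed
qed

definition tag :: "nat \<Rightarrow> bool list" where
  "tag N = concat (replicate N (ones N @ [False])) @ zeros N"

lemma front_tag_eq_tag: "front_tag n k = tag (n * k ^ 3)"
  by (simp add: front_tag_def tag_def)

lemma length_tag: "length (tag N) = N * Suc N + N"
  by (simp add: tag_def ones_def zeros_def)

lemma nth_tag:
  assumes "y < length (tag N)"
  shows "tag N ! y \<longleftrightarrow> y < N * Suc N \<and> y mod Suc N \<noteq> N"
proof (cases "y < N * Suc N")
  case True
  have "tag N ! y = replicate N (ones N @ [False]) ! (y div Suc N) ! (y mod Suc N)"
    using True nth_concat_equal_length[of "replicate N (ones N @ [False])" "Suc N" y]
    by (simp add: tag_def nth_append ones_def mult.commute)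
  also have "\<dots> = (ones N @ [False]) ! (y mod Suc N)"
    using True by (simp add: less_mult_imp_div_less)
  finally show ?thesis
    using True mod_less_divisor[of "Suc N" y] by (auto simp: ones_def nth_append less_Suc_eq)
next
  case False
  then show ?thesis using assms by (simp add: tag_def nth_append zeros_def ones_def)
qed

lemma mod_Suc_eq_top_unique:
  assumes "(a + t) mod Suc N = N" "t < N"
  shows "t = N - a mod Suc N"
proof -
  define c where "c = a mod Suc N"
  have c: "c \<le> N" unfolding c_def using less_Suc_eq_le by fastforce
  have eq: "(c + t) mod Suc N = N" unfolding c_def using assms(1) by (simp add: mod_add_left_eq)
  show ?thesis
  proof (cases "c + t < Suc N")
    case True
    then show ?thesis using eq c unfolding c_def[symmetric] by simp
  next
    case False
    then have "(c + t) mod Suc N = c + t - Suc N" using c assms(2) by (simp add: le_mod_geq)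
    then show ?thesis using eq c assms(2) by simp
  qed
qed

lemma card_residue_window: "N - 1 \<le> card {t. t < N \<and> (a + t) mod Suc N \<noteq> N}"
proof -
  have "{..<N} - {N - a mod Suc N} \<subseteq> {t. t < N \<and> (a + t) mod Suc N \<noteq> N}"
    using mod_Suc_eq_top_unique by blast
  then have "card ({..<N} - {N - a mod Suc N}) \<le> card {t. t < N \<and> (a + t) mod Suc N \<noteq> N}"
    by (rule card_mono[rotated]) simp
  then show ?thesis by (simp add: card_Diff_singleton_if split: if_splits)
qed

lemma hamming_tag_shift_left:
  assumes "length w = length (tag N)" "0 < r" "r \<le> N * Suc N"
    and shift: "\<forall>x < length (tag N). r + x < length (tag N) \<longrightarrow> w ! x = tag N ! (r + x)"
  shows "N - 1 \<le> hamming w (tag N)"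
  \<comment> \<open>For r < N the isolated zeros of the tag meet ones of the shifted copy; otherwise the
    final zero run of the shifted copy meets the periodic part of the tag.\<close>
proof (cases "r < N")
  case True
  let ?A = "(\<lambda>j. j * Suc N + N) ` {..<N - 1}"
  have mismatch: "x < length w \<and> w ! x \<noteq> tag N ! x" if "x \<in> ?A" for x
  proof -
    obtain j where j: "j < N - 1" "x = j * Suc N + N" using \<open>x \<in> ?A\<close> by blast
    have "Suc (Suc j) * Suc N \<le> N * Suc N" using j by (intro mult_le_mono1) simp
    then have lt: "Suc j * Suc N + (r - 1) < N * Suc N" using \<open>r < N\<close> by simp
    have "r + x = Suc j * Suc N + (r - 1)" using \<open>0 < r\<close> j by simp
    moreover have "w ! x = tag N ! (r + x)"
      using shift lt \<open>r < N\<close> j by (simp add: length_tag)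
    ultimately have "w ! x = tag N ! (Suc j * Suc N + (r - 1))" by metis
    moreover have "(Suc j * Suc N + (r - 1)) mod Suc N = r - 1" "(j * Suc N + N) mod Suc N = N"
      using \<open>r < N\<close> by (subst mod_mult_self3, simp)+
    ultimately show ?thesis using lt \<open>r < N\<close> j assms(1) by (simp add: nth_tag length_tag)
  qed
  have "card ?A = N - 1"
    by (subst card_image) (auto simp: inj_on_def simp del: mult_Suc_right)
  moreover have "card ?A \<le> hamming w (tag N)"
    using mismatch by (intro card_le_hamming assms(1)) blast
  ultimately show ?thesis by simp
next
  case False
  define a where "a = N * Suc N - r"
  let ?A = "(\<lambda>t. a + t) ` {t. t < N \<and> (a + t) mod Suc N \<noteq> N}"
  have mismatch: "x < length w \<and> w ! x \<noteq> tag N ! x" if "x \<in> ?A" for x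
  proof -
    obtain t where t: "t < N" "(a + t) mod Suc N \<noteq> N" "x = a + t" using \<open>x \<in> ?A\<close> by blast
    have x: "x < N * Suc N" and rx: "r + x = N * Suc N + t"
      using t False assms(3) unfolding a_def by simp_all
    have "w ! x = tag N ! (r + x)" using shift x rx t(1) by (simp add: length_tag)
    then show ?thesis using x rx t assms(1) by (simp add: nth_tag length_tag)
  qed
  have "N - 1 \<le> card ?A"
    using card_residue_window[of N a] by (simp add: card_image)
  also have "card ?A \<le> hamming w (tag N)"
    using mismatch by (intro card_le_hamming assms(1)) blast
  finally show ?thesis .
qed

lemma hamming_tag_shift_right:
  assumes "length w = length (tag N)" "0 < u" "u \<le> N * Suc N"
    and shift: "\<forall>x < length (tag N). u \<le> x \<longrightarrow> w ! x = tag N ! (x - u)"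
  shows "N - 1 \<le> hamming w (tag N)"
  \<comment> \<open>For u < N the isolated zeros of the tag meet ones of the shifted copy; otherwise the
    final zero run of the tag meets the periodic part of the shifted copy.\<close>
proof (cases "u < N")
  case True
  let ?A = "(\<lambda>j. j * Suc N + N) ` {..<N}"
  have mismatch: "x < length w \<and> w ! x \<noteq> tag N ! x" if "x \<in> ?A" for x
  proof -
    obtain j where j: "j < N" "x = j * Suc N + N" using \<open>x \<in> ?A\<close> by blast
    have "Suc j * Suc N \<le> N * Suc N" using j by (intro mult_le_mono1) simp
    then have x: "x < N * Suc N" using j by simp
    have "x - u = j * Suc N + (N - u)" using True j by simp
    moreover have "w ! x = tag N ! (x - u)"
      using shift x True j by (simp add: length_tag)
    ultimately have "w ! x = tag N ! (j * Suc N + (N - u))" by metis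
    moreover have "(j * Suc N + (N - u)) mod Suc N = N - u" "(j * Suc N + N) mod Suc N = N"
      by (subst mod_mult_self3, simp)+
    ultimately show ?thesis using x j True \<open>0 < u\<close> assms(1) by (auto simp: nth_tag length_tag)
  qed
  have "card ?A = N"
    by (subst card_image) (auto simp: inj_on_def simp del: mult_Suc_right)
  moreover have "card ?A \<le> hamming w (tag N)"
    using mismatch by (intro card_le_hamming assms(1)) blast
  ultimately show ?thesis by simp
next
  case False
  define a where "a = N * Suc N - u"
  let ?A = "(\<lambda>t. N * Suc N + t) ` {t. t < N \<and> (a + t) mod Suc N \<noteq> N}"
  have mismatch: "x < length w \<and> w ! x \<noteq> tag N ! x" if "x \<in> ?A" for x
  proof -
    obtain t where t: "t < N" "(a + t) mod Suc N \<noteq> N" "x = N * Suc N + t"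
      using \<open>x \<in> ?A\<close> by blast
    have ux: "u \<le> x" and xu: "x - u = a + t" and lt: "a + t < N * Suc N"
      using t False assms(3) unfolding a_def by simp_all
    have "w ! x = tag N ! (x - u)" using shift ux t by (simp add: length_tag)
    then show ?thesis using xu lt t assms(1) by (simp add: nth_tag length_tag)
  qed
  have "N - 1 \<le> card ?A"
    using card_residue_window[of N a] by (simp add: card_image)
  also have "card ?A \<le> hamming w (tag N)"
    using mismatch by (intro card_le_hamming assms(1)) blast
  finally show ?thesis .
qed

text \<open>The hypothesis on w says that it is the window at offset r of a string of period
  |tag N| + E each period of which begins with tag N.\<close>

lemma hamming_tag_misaligned:
  assumes "length w = length (tag N)" "E \<le> N" "0 < r" "r < length (tag N) + E"
    and periodic: "\<forall>x < length (tag N). (r + x) mod (length (tag N) + E) < length (tag N) \<longrightarrow>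
      w ! x = tag N ! ((r + x) mod (length (tag N) + E))"
  shows "N - 1 \<le> hamming w (tag N)"
proof (cases "r \<le> N * Suc N")
  case True
  have "\<forall>x < length (tag N). r + x < length (tag N) \<longrightarrow> w ! x = tag N ! (r + x)"
    using periodic by auto
  then show ?thesis using hamming_tag_shift_left assms(1,3) True by blast
next
  case False
  define u where "u = length (tag N) + E - r"
  have "N + N \<le> N * Suc N" by simp
  then have u: "0 < u" "u \<le> N * Suc N"
    using False assms(2,4) unfolding u_def length_tag by linarith+
  have "(r + x) mod (length (tag N) + E) = x - u" if "u \<le> x" "x < length (tag N)" for x
    using that assms(4) unfolding u_def by (simp add: le_mod_geq)
  then have "\<forall>x < length (tag N). u \<le> x \<longrightarrow> w ! x = tag N ! (x - u)"
    using periodic by auto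
  then show ?thesis using hamming_tag_shift_right assms(1) u by blast
qed

section \<open>Column counts and edge encodings\<close>

lemma hamming_sum_ge_column_bound:
  assumes "finite P" "length t = l" "\<forall>p\<in>P. length (w p) = l"
    and column: "\<forall>q<l. T + card {p\<in>P. w p ! q} \<le> card P"
  shows "T * l \<le> (\<Sum>p\<in>P. hamming t (w p)) + T * hamming t (ones l)"
proof -
  have per_column: "T \<le> card {p\<in>P. t ! q \<noteq> w p ! q} + T * of_bool (\<not> t ! q)" if "q < l" for q
  proof (cases "t ! q")
    case True
    have "{p\<in>P. t ! q \<noteq> w p ! q} = P - {p\<in>P. w p ! q}" using True by auto
    then have "card {p\<in>P. t ! q \<noteq> w p ! q} = card P - card {p\<in>P. w p ! q}"
      using assms(1) by (simp add: card_Diff_subset)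
    then show ?thesis using column that by fastforce
  qed simp
  have "T * l = (\<Sum>q<l. T)" by simp
  also have "\<dots> \<le> (\<Sum>q<l. card {p\<in>P. t ! q \<noteq> w p ! q} + T * of_bool (\<not> t ! q))"
    by (rule sum_mono) (use per_column in simp)
  also have "\<dots> = (\<Sum>q<l. (\<Sum>p\<in>P. of_bool (t ! q \<noteq> w p ! q)) + T * of_bool (t ! q \<noteq> True))"
    using assms(1) by (simp add: Int_def conj_commute)
  also have "\<dots> = (\<Sum>p\<in>P. \<Sum>q<l. of_bool (t ! q \<noteq> w p ! q)) + T * (\<Sum>q<l. of_bool (t ! q \<noteq> True))"
    by (simp add: sum.distrib sum_distrib_left sum.swap[of _ "{..<l}"] del: sum_of_bool_eq)
  also have "\<dots> = (\<Sum>p\<in>P. hamming t (w p)) + T * hamming t (ones l)"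
    using assms(2,3) by (simp add: hamming_conv_sum ones_def)
  finally show ?thesis .
qed

lemma finite_pairs [simp]: "finite (pairs k)"
  by (rule finite_subset[of _ "{1..k} \<times> {1..k}"]) (auto simp: pairs_def)

lemma card_pairs: "card (pairs k) = k choose 2"
proof (induction k)
  case 0
  have "pairs 0 = {}" by (auto simp: pairs_def)
  then show ?case by simp
next
  case (Suc k)
  have "pairs (Suc k) = pairs k \<union> (\<lambda>i. (i, Suc k)) ` {1..k}"
    by (auto simp: pairs_def)
  moreover have "pairs k \<inter> (\<lambda>i. (i, Suc k)) ` {1..k} = {}"
    by (auto simp: pairs_def)
  ultimately have "card (pairs (Suc k)) = card (pairs k) + card ((\<lambda>i. (i, Suc k)) ` {1..k})"
    by (simp add: card_Un_disjoint)
  also have "card ((\<lambda>i. (i, Suc k)) ` {1..k}) = k"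
    by (subst card_image) (auto simp: inj_on_def)
  finally show ?case using Suc.IH by (simp add: numeral_2_eq_2)
qed

lemma card_pairs_containing:
  assumes "1 \<le> b" "b \<le> k"
  shows "card {p \<in> pairs k. fst p = b \<or> snd p = b} \<le> k - 1"
proof -
  have "{p \<in> pairs k. fst p = b \<or> snd p = b} \<subseteq> Pair b ` {b<..k} \<union> (\<lambda>i. (i, b)) ` {1..<b}"
    by (auto simp: pairs_def)
  then have "card {p \<in> pairs k. fst p = b \<or> snd p = b}
      \<le> card (Pair b ` {b<..k} \<union> (\<lambda>i. (i, b)) ` {1..<b})"
    by (rule card_mono[rotated]) simp
  also have "\<dots> \<le> card (Pair b ` {b<..k}) + card ((\<lambda>i. (i, b)) ` {1..<b})"
    by (rule card_Un_le)
  also have "\<dots> \<le> card {b<..k} + card {1..<b}"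
    by (intro add_mono card_image_le) auto
  finally show ?thesis using assms by simp
qed

lemma num_templates_add: "num_templates k + (k - 1) = k choose 2"
proof -
  have "2 * (k - 1) \<le> k * (k - 1)"
    by (cases "k \<le> 1") auto
  then have "k - 1 \<le> k * (k - 1) div 2"
    using div_le_mono[of "2 * (k - 1)" "k * (k - 1)" 2] by simp
  then show ?thesis by (simp add: num_templates_def choose_two)
qed

lemma num_templates_pos:
  assumes "3 \<le> k"
  shows "1 \<le> num_templates k"
proof -
  have "2 * k \<le> k * (k - 1)" using assms by simp
  then have "k \<le> k choose 2"
    using div_le_mono[of "2 * k" "k * (k - 1)" 2] by (simp add: choose_two)
  then show ?thesis using num_templates_add[of k] assms by linarith
qed

lemma num_templates_add_two_le:
  assumes "2 \<le> k"
  shows "num_templates k + 2 \<le> k * k"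
proof -
  have "k choose 2 \<le> k * (k - 1)" by (simp add: choose_two)
  also have "k * (k - 1) = k * k - k" by (simp add: diff_mult_distrib2)
  finally show ?thesis using num_templates_add[of k] assms by linarith
qed

lemma length_zeros [simp]: "length (zeros m) = m"
  by (simp add: zeros_def)

lemma concat_replicate_zeros: "concat (replicate m (zeros n)) = zeros (m * n)"
  by (induction m) (auto simp: zeros_def replicate_add)

lemma zeros_add: "zeros (a + b) = zeros a @ zeros b"
  by (simp add: zeros_def replicate_add)

lemma encode_eq:
  "encode n k i j (r, s) = zeros ((i - 1) * n + (r - 1)) @ [True] @
     zeros ((n - r) + (j - i - 1) * n + (s - 1)) @ [True] @ zeros ((n - s) + (k - j) * n)"
  by (simp only: encode_def number_def concat_replicate_zeros zeros_add append_assoc prod.case)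

lemma encode_positions:
  assumes "(i, j) \<in> pairs k" "1 \<le> r" "r \<le> n" "1 \<le> s" "s \<le> n"
  shows "(i - 1) * n + (r - 1) + 1 + ((n - r) + (j - i - 1) * n + (s - 1))
      = (j - 1) * n + (s - 1)"
    and "(j - 1) * n + (s - 1) + 1 + ((n - s) + (k - j) * n) = n * k"
proof -
  have ij: "1 \<le> i" "i < j" "j \<le> k" using assms(1) by (simp_all add: pairs_def)
  have "(i - 1) * n + n + (j - i - 1) * n = ((i - 1) + 1 + (j - i - 1)) * n"
    by (simp add: algebra_simps)
  also have "(i - 1) + 1 + (j - i - 1) = j - 1" using ij by simp
  finally show "(i - 1) * n + (r - 1) + 1 + ((n - r) + (j - i - 1) * n + (s - 1))
      = (j - 1) * n + (s - 1)"
    using assms(2,3) by simp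
  have "(j - 1) * n + n + (k - j) * n = ((j - 1) + 1 + (k - j)) * n"
    by (simp add: algebra_simps)
  also have "(j - 1) + 1 + (k - j) = k" using ij by simp
  finally show "(j - 1) * n + (s - 1) + 1 + ((n - s) + (k - j) * n) = n * k"
    using assms(4,5) by (simp add: mult.commute)
qed

lemma length_encode:
  assumes "(i, j) \<in> pairs k" "1 \<le> r" "r \<le> n" "1 \<le> s" "s \<le> n"
  shows "length (encode n k i j (r, s)) = n * k"
  unfolding encode_eq using encode_positions[OF assms] by simp

lemma nth_two_ones:
  assumes "q < a + 1 + b + 1 + c" "(zeros a @ [True] @ zeros b @ [True] @ zeros c) ! q"
  shows "q = a \<or> q = a + 1 + b"
  using assms by (auto simp: nth_append zeros_def nth_Cons split: if_splits nat.splits)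

lemma encode_nth_True:
  assumes "(i, j) \<in> pairs k" "1 \<le> r" "r \<le> n" "1 \<le> s" "s \<le> n"
    and "q < n * k" "encode n k i j (r, s) ! q"
  shows "q = (i - 1) * n + (r - 1) \<or> q = (j - 1) * n + (s - 1)"
  using nth_two_ones[of q] assms(6,7) encode_positions[OF assms(1-5)] unfolding encode_eq
  by metis

lemma encode_column_count:
  assumes "simple_graph_edges n es" "\<forall>p\<in>pairs k. e p \<in> set es" "q < n * k"
  shows "card {p \<in> pairs k. encode n k (fst p) (snd p) (e p) ! q} \<le> k - 1"
proof -
  define b where "b = q div n + 1"
  have "0 < n" using assms(3) by (cases n) auto
  then have b: "1 \<le> b" "b \<le> k"
    unfolding b_def using assms(3) by (simp_all add: Suc_le_eq less_mult_imp_div_less mult.commute)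
  have "fst p = b \<or> snd p = b"
    if p: "p \<in> pairs k" "encode n k (fst p) (snd p) (e p) ! q" for p
  proof -
    obtain i j where "p = (i, j)" by (cases p)
    then have ij: "(i, j) \<in> pairs k" and q: "encode n k i j (e (i, j)) ! q" using p by simp_all
    obtain r s where e: "e (i, j) = (r, s)" "1 \<le> r" "r < s" "s \<le> n"
      using assms(1,2) ij unfolding simple_graph_edges_def by fastforce
    have "r - 1 < n" "s - 1 < n" using e(2-4) by simp_all
    then have "((i - 1) * n + (r - 1)) div n = i - 1" "((j - 1) * n + (s - 1)) div n = j - 1"
      using \<open>0 < n\<close> by (simp_all only: div_mult_self3 div_less neq0_conv add_0_right)
    moreover have "q = (i - 1) * n + (r - 1) \<or> q = (j - 1) * n + (s - 1)"
      using encode_nth_True[OF ij, where r = r and s = s and q = q] e q assms(3) by simp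
    moreover have "1 \<le> i" "1 \<le> j" using ij by (simp_all add: pairs_def)
    ultimately show ?thesis
      unfolding b_def \<open>p = (i, j)\<close> by auto
  qed
  then have "card {p \<in> pairs k. encode n k (fst p) (snd p) (e p) ! q}
      \<le> card {p \<in> pairs k. fst p = b \<or> snd p = b}"
    by (intro card_mono) (simp, blast)
  also have "\<dots> \<le> k - 1" using card_pairs_containing[OF b] .
  finally show ?thesis .
qed

lemma hamming_encode_sum_ge:
  assumes "simple_graph_edges n es" "\<forall>p\<in>pairs k. e p \<in> set es" "length t = n * k"
  shows "num_templates k * (n * k) \<le> (\<Sum>p\<in>pairs k. hamming t (encode n k (fst p) (snd p) (e p)))
    + num_templates k * hamming t (ones (n * k))"
proof (rule hamming_sum_ge_column_bound)
  show "\<forall>p\<in>pairs k. length (encode n k (fst p) (snd p) (e p)) = n * k"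
  proof
    fix p assume p: "p \<in> pairs k"
    then obtain r s where "e p = (r, s)" "1 \<le> r" "r < s" "s \<le> n"
      using assms(1,2) unfolding simple_graph_edges_def by fastforce
    then show "length (encode n k (fst p) (snd p) (e p)) = n * k"
      using p length_encode[of "fst p" "snd p" k r n s] by simp
  qed
  show "\<forall>q<n * k. num_templates k + card {p \<in> pairs k. encode n k (fst p) (snd p) (e p) ! q}
      \<le> card (pairs k)"
  proof (intro allI impI)
    fix q assume "q < n * k"
    then have "card {p \<in> pairs k. encode n k (fst p) (snd p) (e p) ! q} \<le> k - 1"
      by (rule encode_column_count[OF assms(1,2)])
    then show "num_templates k + card {p \<in> pairs k. encode n k (fst p) (snd p) (e p) ! q}
        \<le> card (pairs k)"
      using num_templates_add[of k] by (simp add: card_pairs)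
  qed
qed (simp_all add: assms(3))

section \<open>Choice strings and solutions\<close>

lemma cp_len_eq: "cp_len n k = length (front_tag n k) + n * k"
proof -
  have "n * k ^ 3 * Suc (n * k ^ 3) + n * k ^ 3 = n\<^sup>2 * k ^ 6 + 2 * n * k ^ 3"
    by (simp add: power2_eq_square algebra_simps power_mult_distrib flip: power_add)
  then show ?thesis by (simp add: cp_len_def front_tag_eq_tag length_tag)
qed

lemma length_block:
  assumes "simple_graph_edges n es" "e \<in> set es" "(i, j) \<in> pairs k"
  shows "length (block n k i j e) = cp_len n k"
proof -
  obtain r s where "e = (r, s)" "1 \<le> r" "r < s" "s \<le> n"
    using assms(1,2) unfolding simple_graph_edges_def by auto
  then show ?thesis using assms(3) by (simp add: block_def length_encode cp_len_eq)
qed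

lemma length_blocks:
  assumes "simple_graph_edges n es" "(i, j) \<in> pairs k"
  shows "\<forall>b\<in>set (map (block n k i j) es). length b = cp_len n k"
  using assms length_block by auto

lemma length_choice_string:
  assumes "simple_graph_edges n es" "(i, j) \<in> pairs k"
  shows "length (choice_string n k es i j) = length es * cp_len n k"
  using length_concat_equal_length[OF length_blocks[OF assms]] by (simp add: choice_string_def)

lemma nth_choice_string:
  assumes "simple_graph_edges n es" "(i, j) \<in> pairs k" "q < length (choice_string n k es i j)"
  shows "q div cp_len n k < length es"
    and "choice_string n k es i j ! q
      = block n k i j (es ! (q div cp_len n k)) ! (q mod cp_len n k)"
proof -
  show "q div cp_len n k < length es"
    using assms by (simp add: length_choice_string less_mult_imp_div_less)
  then show "choice_string n k es i j ! q
      = block n k i j (es ! (q div cp_len n k)) ! (q mod cp_len n k)"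
    using assms nth_concat_equal_length[OF length_blocks[OF assms(1,2)], of q]
    by (simp add: length_choice_string) (simp add: choice_string_def)
qed

lemma choice_window_aligned:
  assumes "simple_graph_edges n es" "(i, j) \<in> pairs k" "0 < n"
    and "p + cp_len n k \<le> length (choice_string n k es i j)" "p mod cp_len n k = 0"
  shows "\<exists>e\<in>set es. substr (choice_string n k es i j) p (cp_len n k) = block n k i j e"
proof -
  let ?L = "cp_len n k" and ?c = "choice_string n k es i j"
  have L: "0 < ?L" using assms(2,3) by (simp add: cp_len_def pairs_def)
  have m: "p div ?L < length es"
    using nth_choice_string(1)[OF assms(1,2), of p] assms(4) L by simp
  have "substr ?c p ?L = block n k i j (es ! (p div ?L))"
  proof (rule nth_equalityI)
    fix x assume "x < length (substr ?c p ?L)"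
    then have x: "x < ?L" using assms(4) by (simp add: substr_def)
    have "(p + x) div ?L = p div ?L" "(p + x) mod ?L = x"
      using assms(5) x by (simp_all add: div_add1_eq flip: mod_add_left_eq)
    then show "substr ?c p ?L ! x = block n k i j (es ! (p div ?L)) ! x"
      using nth_choice_string(2)[OF assms(1,2), of "p + x"] x assms(4)
      by (simp add: substr_def)
  qed (use assms m in \<open>simp add: substr_def length_block\<close>)
  then show ?thesis using m by auto
qed

lemma hamming_choice_window_misaligned:
  assumes "simple_graph_edges n es" "(i, j) \<in> pairs k"
    and "p + cp_len n k \<le> length (choice_string n k es i j)" "p mod cp_len n k \<noteq> 0"
  shows "n * k ^ 3 - 1 \<le> hamming (take (length (front_tag n k))
    (substr (choice_string n k es i j) p (cp_len n k))) (front_tag n k)"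
proof -
  let ?N = "n * k ^ 3" and ?L = "cp_len n k" and ?c = "choice_string n k es i j"
  let ?w = "take (length (tag ?N)) (substr ?c p ?L)"
  have L: "?L = length (tag ?N) + n * k" by (simp add: cp_len_eq front_tag_eq_tag)
  have "n * k \<le> ?N" by (cases k) (simp_all add: power3_eq_cube)
  moreover have "length ?w = length (tag ?N)" using assms(3) L by (simp add: substr_def)
  moreover have "0 < ?L"
    using assms(3,4) length_choice_string[OF assms(1,2)] by (cases "?L = 0") auto
  then have "0 < p mod ?L" "p mod ?L < ?L" using assms(4) by simp_all
  moreover have "?w ! x = tag ?N ! ((p mod ?L + x) mod ?L)"
    if "x < length (tag ?N)" "(p mod ?L + x) mod ?L < length (tag ?N)" for x
  proof -
    have "?w ! x = ?c ! (p + x)" using that(1) assms(3) L by (simp add: substr_def)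
    also have "\<dots> = block n k i j (es ! ((p + x) div ?L)) ! ((p + x) mod ?L)"
      using nth_choice_string(2)[OF assms(1,2)] that(1) assms(3) L by simp
    also have "\<dots> = tag ?N ! ((p mod ?L + x) mod ?L)"
      using that(2) by (simp add: block_def nth_append front_tag_eq_tag mod_add_left_eq)
    finally show ?thesis .
  qed
  ultimately have "?N - 1 \<le> hamming ?w (tag ?N)"
    by (intro hamming_tag_misaligned[where E = "n * k"] allI impI) (simp_all flip: L)
  then show ?thesis by (simp add: front_tag_eq_tag)
qed

lemma solution_template_match:
  assumes "is_solution n k es s pc pt" "t < num_templates k"
  shows "substr (template_string n k) (pt t) (cp_len n k) = template_string n k"
proof -
  have "length (template_string n k) = cp_len n k"
    by (simp add: template_string_def cp_len_eq ones_def)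
  then show ?thesis
    using assms unfolding is_solution_def substr_def by auto
qed

lemma solution_cost_le:
  assumes "is_solution n k es s pc pt"
  shows "(\<Sum>(i, j)\<in>pairs k. hamming s (substr (choice_string n k es i j) (pc i j) (cp_len n k)))
    + num_templates k * hamming s (template_string n k) \<le> num_templates k * (n * k)"
  using assms solution_template_match[OF assms]
  by (simp add: is_solution_def cp_dist_def mult.assoc)

lemma solution_choice_match_block:
  assumes "simple_graph_edges n es" "3 \<le> k" "0 < n" "is_solution n k es s pc pt" "(i, j) \<in> pairs k"
  shows "\<exists>e\<in>set es. substr (choice_string n k es i j) (pc i j) (cp_len n k) = block n k i j e"
proof -
  let ?L = "cp_len n k" and ?F = "front_tag n k" and ?T = "num_templates k"
  let ?W = "\<lambda>i j. substr (choice_string n k es i j) (pc i j) ?L" and ?tm = "template_string n k"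
  have fits: "pc i j + ?L \<le> length (choice_string n k es i j)" and len_s: "length s = ?L"
    using assms(4,5) by (auto simp: is_solution_def)
  show ?thesis
  proof (cases "pc i j mod ?L = 0")
    case True
    then show ?thesis by (rule choice_window_aligned[OF assms(1,5,3) fits])
  next
    case False
    have len_F: "length ?F \<le> ?L" by (simp add: cp_len_eq)
    let ?take = "take (length ?F)"
    have "n * k ^ 3 - 1 \<le> hamming (?take (?W i j)) ?F"
      using hamming_choice_window_misaligned[OF assms(1,5) fits False] .
    also have "\<dots> \<le> hamming (?take (?W i j)) (?take s) + hamming (?take s) ?F"
      using fits len_s len_F by (intro hamming_triangle) (simp_all add: substr_def)
    also have "\<dots> \<le> hamming s (?W i j) + hamming s ?tm"
    proof (intro add_mono)
      show "hamming (?take (?W i j)) (?take s) \<le> hamming s (?W i j)"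
        using hamming_take_le hamming_commute by metis
      show "hamming (?take s) ?F \<le> hamming s ?tm"
        using hamming_take_le[of "length ?F" s ?tm] by (simp add: template_string_def)
    qed
    also have "\<dots> \<le> ?T * (n * k)"
    proof -
      have "hamming s (?W i j) \<le> (\<Sum>(i, j)\<in>pairs k. hamming s (?W i j))"
        using member_le_sum[OF assms(5), of "\<lambda>(i, j). hamming s (?W i j)"] by simp
      moreover have "hamming s ?tm \<le> ?T * hamming s ?tm"
        using num_templates_pos[OF assms(2)] by simp
      ultimately show ?thesis using solution_cost_le[OF assms(4)] by linarith
    qed
    finally have "n * k ^ 3 - 1 \<le> ?T * (n * k)" .
    moreover have "(?T + 2) * (n * k) \<le> n * k ^ 3"
    proof -
      have "(?T + 2) * (n * k) \<le> k * k * (n * k)"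
        using num_templates_add_two_le assms(2) by (intro mult_le_mono1) simp
      then show ?thesis by (simp add: power3_eq_cube algebra_simps)
    qed
    moreover have "0 < n * k" using assms(2,3) by simp
    ultimately have False by (simp only: add_mult_distrib)
    then show ?thesis ..
  qed
qed

lemma solution_prefix_front_tag:
  assumes "simple_graph_edges n es" "3 \<le> k" "0 < n" "is_solution n k es s pc pt"
  shows "prefix (front_tag n k) s"
proof -
  let ?F = "front_tag n k" and ?T = "num_templates k"
  let ?W = "\<lambda>i j. substr (choice_string n k es i j) (pc i j) (cp_len n k)"
  have "\<forall>p\<in>pairs k. \<exists>e. e \<in> set es \<and> ?W (fst p) (snd p) = block n k (fst p) (snd p) e"
    using solution_choice_match_block[OF assms] by fastforce
  then obtain e where
    e: "\<forall>p\<in>pairs k. e p \<in> set es \<and> ?W (fst p) (snd p) = block n k (fst p) (snd p) (e p)"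
    by (metis bchoice)
  let ?enc = "\<lambda>p. encode n k (fst p) (snd p) (e p)"
  define s1 s2 where "s1 = take (length ?F) s" and "s2 = drop (length ?F) s"
  have s: "s = s1 @ s2" and len_s1: "length s1 = length ?F" and len_s2: "length s2 = n * k"
    using assms(4) unfolding s1_def s2_def by (simp_all add: is_solution_def cp_len_eq)
  define h where "h = hamming s1 ?F"
  have "(\<Sum>(i, j)\<in>pairs k. hamming s (?W i j)) = (\<Sum>p\<in>pairs k. h + hamming s2 (?enc p))"
    using e len_s1 unfolding s h_def by (intro sum.cong) (auto simp: block_def hamming_append)
  moreover have "hamming s (template_string n k) = h + hamming s2 (ones (n * k))"
    using len_s1 unfolding s h_def template_string_def by (simp add: hamming_append)
  ultimately have "(\<Sum>p\<in>pairs k. h + hamming s2 (?enc p)) + ?T * (h + hamming s2 (ones (n * k)))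
      \<le> ?T * (n * k)"
    using solution_cost_le[OF assms(4)] by simp
  moreover have "?T * (n * k) \<le> (\<Sum>p\<in>pairs k. hamming s2 (?enc p)) + ?T * hamming s2 (ones (n * k))"
    using e len_s2 by (intro hamming_encode_sum_ge[OF assms(1)]) simp_all
  ultimately have "?T * h = 0" by (simp only: sum.distrib distrib_left)
  then have "s1 = ?F"
    using num_templates_pos[OF assms(2)] hamming_eq_0_iff[OF len_s1] unfolding h_def by simp
  then show ?thesis unfolding s by simp
qed

theorem lemma6:
  fixes n k :: nat and es :: "(nat \<times> nat) list" and s :: "bool list"
    and pc :: "nat \<Rightarrow> nat \<Rightarrow> nat" and pt :: "nat \<Rightarrow> nat"
  assumes "simple_graph_edges n es"
    and "k \<ge> 3"
    and "is_solution n k es s pc pt"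
  shows "prefix (front_tag n k) s
    \<and> (\<forall>(i, j) \<in> pairs k. prefix (front_tag n k)
          (substr (choice_string n k es i j) (pc i j) (cp_len n k)))
    \<and> (\<forall>t < num_templates k. prefix (front_tag n k)
          (substr (template_string n k) (pt t) (cp_len n k)))"
proof (cases "n = 0")
  case True
  then have "front_tag n k = []" by (simp add: front_tag_def zeros_def)
  then show ?thesis by simp
next
  case False
  then have "prefix (front_tag n k) s"
    using solution_prefix_front_tag assms by blast
  moreover have "\<forall>(i, j) \<in> pairs k. prefix (front_tag n k)
      (substr (choice_string n k es i j) (pc i j) (cp_len n k))"
    using solution_choice_match_block[OF assms(1,2) _ assms(3)] False by (force simp: block_def)
  moreover have "\<forall>t < num_templates k. prefix (front_tag n k)
      (substr (template_string n k) (pt t) (cp_len n k))"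
    using solution_template_match[OF assms(3)] by (simp add: template_string_def)
  ultimately show ?thesis by blast
qed

end
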